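(* Let $q$ be a prime power, $t\ge1$, $s<t$ a nonnegative integer, $\{u_1,\dots,u_t\}$ an $\mathbb{F}_q$-basis of $\mathbb{F}_{q^t}$, $W$ an arbitrary $\mathbb{F}_q$-subspace of $\mathbb{F}_{q^t}$ of dimension $s$, and $\alpha^*\in\mathbb{F}_{q^t}$. Let $L_W(x)=\prod_{w\in W}(x-w)$ and $g_i(x)=L_W\big(u_i(x-\alpha^* )\big)/(x-\alpha^* )$ for $i=1,\dots,t$ (a polynomial, since $L_W(0)=0$). Then $\{g_1(\alpha^* ),\dots,g_t(\alpha^* )\}$ has rank $t$ over $\mathbb{F}_q$. *)

theory Defs
  imports "HOL-Computational_Algebra.Polynomial" "HOL-Number_Theory.Prime_Powers"
begin

text \<open>A subfield F of the field 'k (plays the role of F_q inside F_{q^t}).\<close>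
definition is_subfield :: "'k::field set \<Rightarrow> bool" where
  "is_subfield F \<longleftrightarrow> 0 \<in> F \<and> 1 \<in> F \<and>
     (\<forall>a\<in>F. \<forall>b\<in>F. a + b \<in> F \<and> a * b \<in> F) \<and>
     (\<forall>a\<in>F. - a \<in> F) \<and> (\<forall>a\<in>F. a \<noteq> 0 \<longrightarrow> inverse a \<in> F)"

definition lin_indep_fam :: "'k::field set \<Rightarrow> 'i set \<Rightarrow> ('i \<Rightarrow> 'k) \<Rightarrow> bool" where
  "lin_indep_fam F I v \<longleftrightarrow> finite I \<and>
     (\<forall>c. (\<forall>i\<in>I. c i \<in> F) \<longrightarrow> (\<Sum>i\<in>I. c i * v i) = 0 \<longrightarrow> (\<forall>i\<in>I. c i = 0))"

definition span_fam :: "'k::field set \<Rightarrow> 'i set \<Rightarrow> ('i \<Rightarrow> 'k) \<Rightarrow> 'k set" where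
  "span_fam F I v = {\<Sum>i\<in>I. c i * v i | c. \<forall>i\<in>I. c i \<in> F}"

definition lin_indep_set :: "'k::field set \<Rightarrow> 'k set \<Rightarrow> bool" where
  "lin_indep_set F B \<longleftrightarrow> lin_indep_fam F B id"

definition is_subspace :: "'k::field set \<Rightarrow> 'k set \<Rightarrow> bool" where
  "is_subspace F W \<longleftrightarrow> 0 \<in> W \<and> (\<forall>x\<in>W. \<forall>y\<in>W. x + y \<in> W) \<and>
     (\<forall>a\<in>F. \<forall>x\<in>W. a * x \<in> W)"

definition has_dim :: "'k::field set \<Rightarrow> 'k set \<Rightarrow> nat \<Rightarrow> bool" where
  "has_dim F W d \<longleftrightarrow> (\<exists>B. B \<subseteq> W \<and> finite B \<and> card B = d \<and>
      lin_indep_set F B \<and> span_fam F B id = W)"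

definition is_basis_fam :: "'k::field set \<Rightarrow> nat \<Rightarrow> (nat \<Rightarrow> 'k) \<Rightarrow> bool" where
  "is_basis_fam F t u \<longleftrightarrow> lin_indep_fam F {1..t} u \<and> span_fam F {1..t} u = UNIV"

definition rank_over :: "'k::field set \<Rightarrow> 'k set \<Rightarrow> nat" where
  "rank_over F S = Max {card B | B. B \<subseteq> S \<and> lin_indep_set F B}"

definition subspace_poly :: "'k::field set \<Rightarrow> 'k poly" where
  "subspace_poly W = (\<Prod>w\<in>W. [:- w, 1:])"

definition g_poly :: "'k::field set \<Rightarrow> 'k \<Rightarrow> 'k \<Rightarrow> 'k poly" where
  "g_poly W ui \<alpha> = pcompose (subspace_poly W) [:- (ui * \<alpha>), ui:] div [:- \<alpha>, 1:]"

end

theory Submission imports Defs begin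

text \<open>Since \<open>0 \<in> W\<close>, \<open>L\<^sub>W(x) = x \<cdot> P(x)\<close> with \<open>P(x) = \<Prod>\<^sub>w\<^sub>\<in>\<^sub>W\<^sub>-\<^sub>{\<^sub>0\<^sub>} (x - w)\<close>, so
  \<open>g\<^sub>i(x) = u\<^sub>i \<cdot> P(u\<^sub>i(x - \<alpha>))\<close> and \<open>g\<^sub>i(\<alpha>) = u\<^sub>i \<cdot> P(0)\<close>. The constant \<open>P(0)\<close> is nonzero
  and independent of \<open>i\<close>, so the values \<open>g\<^sub>i(\<alpha>)\<close> are a nonzero multiple of the basis
  \<open>u\<^sub>1, \<dots>, u\<^sub>t\<close> and hence \<open>t\<close> distinct \<open>F\<close>-independent elements.\<close>

lemma poly_g_poly_at_root:
  fixes W :: "'k::field set"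
  assumes "finite W" and "0 \<in> W"
  shows "poly (g_poly W ui \<alpha>) \<alpha> = ui * (\<Prod>w\<in>W-{0}. - w)"
proof -
  define P where "P = (\<Prod>w\<in>W-{0}. [:-w, 1:])"
  have L: "subspace_poly W = [:0, 1:] * P"
    unfolding subspace_poly_def P_def using prod.remove[OF assms, of "\<lambda>w. [:-w, 1:]"] by simp
  have lin: "[:-(ui * \<alpha>), ui:] = smult ui [:-\<alpha>, 1:]" by simp
  have comp: "pcompose (subspace_poly W) [:-(ui * \<alpha>), ui:]
      = [:-\<alpha>, 1:] * smult ui (pcompose P [:-(ui * \<alpha>), ui:])"
  proof -
    have "pcompose [:0, 1:] [:-(ui * \<alpha>), ui:] = [:-(ui * \<alpha>), ui:]"
      by (simp add: pcompose_pCons)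
    then show ?thesis unfolding L pcompose_mult by (metis lin mult_smult_left mult_smult_right)
  qed
  have g: "g_poly W ui \<alpha> = smult ui (pcompose P [:-(ui * \<alpha>), ui:])"
    unfolding g_poly_def comp by (rule nonzero_mult_div_cancel_left) simp
  have "poly [:-(ui * \<alpha>), ui:] \<alpha> = 0" by (simp add: mult.commute)
  then show ?thesis unfolding g P_def poly_smult poly_pcompose poly_prod by simp
qed

lemma lin_indep_fam_inj_on:
  fixes v :: "'i \<Rightarrow> 'k::field"
  assumes "is_subfield F" and "lin_indep_fam F I v"
  shows "inj_on v I"
proof (rule inj_onI, rule ccontr)
  fix i j assume ij: "i \<in> I" "j \<in> I" "v i = v j" "i \<noteq> j"
  define c :: "_ \<Rightarrow> 'k" where "c k = (if k = i then 1 else if k = j then -1 else 0)" for k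
  have "c k * v k = (if k = i then v i else 0) - (if k = j then v j else 0)" for k
    using ij unfolding c_def by auto
  then have "(\<Sum>k\<in>I. c k * v k) = 0"
    using ij assms(2) by (simp add: sum_subtractf lin_indep_fam_def)
  moreover have "\<forall>k\<in>I. c k \<in> F"
    using assms(1) unfolding c_def is_subfield_def by auto
  ultimately have "c i = 0" using assms(2) ij unfolding lin_indep_fam_def by blast
  then show False unfolding c_def by simp
qed

lemma lin_indep_fam_scale:
  assumes "lin_indep_fam F I v" and "a \<noteq> 0"
  shows "lin_indep_fam F I (\<lambda>i. a * v i)"
  unfolding lin_indep_fam_def
proof (intro conjI allI impI)
  show "finite I" using assms(1) unfolding lin_indep_fam_def by simp
  fix c assume "\<forall>i\<in>I. c i \<in> F" and "(\<Sum>i\<in>I. c i * (a * v i)) = 0"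
  moreover have "(\<Sum>i\<in>I. c i * (a * v i)) = a * (\<Sum>i\<in>I. c i * v i)"
    by (simp add: sum_distrib_left ac_simps)
  ultimately show "\<forall>i\<in>I. c i = 0"
    using assms unfolding lin_indep_fam_def by simp
qed

lemma lin_indep_set_image:
  assumes "lin_indep_fam F I v" and "inj_on v I"
  shows "lin_indep_set F (v ` I)"
  unfolding lin_indep_set_def lin_indep_fam_def
proof (intro conjI allI impI ballI)
  show "finite (v ` I)" using assms(1) unfolding lin_indep_fam_def by simp
  fix d x assume "\<forall>x\<in>v ` I. d x \<in> F" and "(\<Sum>x\<in>v ` I. d x * id x) = 0" and "x \<in> v ` I"
  moreover have "(\<Sum>x\<in>v ` I. d x * id x) = (\<Sum>i\<in>I. d (v i) * v i)"
    by (simp add: sum.reindex[OF assms(2)])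
  ultimately show "d x = 0"
    using assms(1) unfolding lin_indep_fam_def by (auto dest: spec[of _ "d \<circ> v"])
qed

lemma rank_over_lin_indep_set:
  assumes "finite S" and "lin_indep_set F S"
  shows "rank_over F S = card S"
  unfolding rank_over_def
proof (rule Max_eqI)
  show "finite {card B | B. B \<subseteq> S \<and> lin_indep_set F B}"
    by (rule finite_subset[of _ "{..card S}"]) (auto intro: card_mono assms(1))
qed (use assms in \<open>auto intro: card_mono\<close>)

theorem lemma7:
  fixes F :: "'k::{field,finite} set"
    and q t s :: nat
    and u :: "nat \<Rightarrow> 'k"
    and W :: "'k set"
    and \<alpha> :: 'k
  assumes "primepow q"
    and "is_subfield F" and "card F = q" and "card (UNIV :: 'k set) = q ^ t"
    and "t \<ge> 1" and "s < t"
    and "is_basis_fam F t u"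
    and "is_subspace F W" and "has_dim F W s"
  shows "rank_over F ((\<lambda>i. poly (g_poly W (u i) \<alpha>) \<alpha>) ` {1..t}) = t"
proof -
  define c where "c = (\<Prod>w\<in>W-{0}. - w)"
  have "0 \<in> W" using assms(8) unfolding is_subspace_def by simp
  then have g_values: "(\<lambda>i. poly (g_poly W (u i) \<alpha>) \<alpha>) ` {1..t} = (\<lambda>i. c * u i) ` {1..t}"
    by (simp add: poly_g_poly_at_root c_def mult.commute)
  have "c \<noteq> 0" unfolding c_def by simp
  then have indep: "lin_indep_fam F {1..t} (\<lambda>i. c * u i)"
    using assms(7) lin_indep_fam_scale unfolding is_basis_fam_def by blast
  then have inj: "inj_on (\<lambda>i. c * u i) {1..t}"
    using assms(2) by (rule lin_indep_fam_inj_on[rotated])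
  show ?thesis
    unfolding g_values
    using rank_over_lin_indep_set[OF _ lin_indep_set_image[OF indep inj]] card_image[OF inj]
    by simp
qed

end
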